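(* Let $n\ge3$, $j\in\{1,\dots,n-2\}$, $N\in\mathbb S^{n-1}$, and let $K\subseteq N^\perp$ be a compact convex set. Let $u\in\mathbb S^{n-1}\setminus\{\pm N\}$ and $\tilde u:=\frac{u|N^\perp}{|u|N^\perp|}$, and suppose $h_K$ is twice differentiable at $\tilde u$. Then $h_K$ is twice differentiable at $u$ and $$s_j(K,u)=\frac{1-\frac{j}{n-1}}{\langle u,\tilde u\rangle^j}\,s_j^{N^\perp}(K,\tilde u).$$
   Context: $h_K(x)=\max_{y\in K}\langle x,y\rangle$ on $\mathbb R^n$; $u|N^\perp$ is the orthogonal projection onto $N^\perp$. At a point $u\in\mathbb S^{n-1}$ where $h_K$ is twice differentiable, $s_j(K,u)=\binom{n-1}{j}^{-1}\sigma_j(\lambda_1,\dots,\lambda_{n-1})$, where $\lambda_i$ are the eigenvalues of $(D_{e_i}D_{e_k}h_K(u))_{i,k=1}^{n-1}$ for an orthonormal basis $e_1,\dots,e_{n-1}$ of $u^\perp$ and $\sigma_j$ is the $j$-th elementary symmetric polynomial. Regarding $K$ as a compact convex set in the $(n-1)$-dimensional space $N^\perp$, $s_j^{N^\perp}(K,\tilde u)=\binom{n-2}{j}^{-1}\sigma_j(\mu_1,\dots,\mu_{n-2})$, where $\mu_i$ are the eigenvalues of $(D_{e_i}D_{e_k}h_K(\tilde u))_{i,k=1}^{n-2}$ for an orthonormal basis $e_1,\dots,e_{n-2}$ of $N^\perp\cap\tilde u^\perp$. *)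

theory Defs
  imports "HOL-Analysis.Analysis" "Jordan_Normal_Form.Char_Poly"
begin

definition supp_fun :: "(real^'n) set \<Rightarrow> real^'n \<Rightarrow> real" where
  "supp_fun K x = Sup ((\<lambda>y. x \<bullet> y) ` K)"

definition grad :: "(real^'n \<Rightarrow> real) \<Rightarrow> real^'n \<Rightarrow> real^'n" where
  "grad h x = (\<chi> k. frechet_derivative h (at x) (axis k 1))"

definition twice_diff_at :: "(real^'n \<Rightarrow> real) \<Rightarrow> real^'n \<Rightarrow> bool" where
  "twice_diff_at h x \<longleftrightarrow> (\<forall>\<^sub>F y in at x. h differentiable at y) \<and> h differentiable at x
      \<and> grad h differentiable at x"

definition DD :: "(real^'n \<Rightarrow> real) \<Rightarrow> real^'n \<Rightarrow> real^'n \<Rightarrow> real^'n \<Rightarrow> real" where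
  "DD h x v w = frechet_derivative (\<lambda>y. frechet_derivative h (at y) w) (at x) v"

definition onb :: "(real^'n) set \<Rightarrow> nat \<Rightarrow> (nat \<Rightarrow> real^'n) \<Rightarrow> bool" where
  "onb W m e \<longleftrightarrow> (\<forall>i<m. e i \<in> W) \<and> (\<forall>i<m. \<forall>k<m. e i \<bullet> e k = (if i = k then 1 else 0))
      \<and> span (e ` {..<m}) = W"

definition hess_mat :: "(real^'n \<Rightarrow> real) \<Rightarrow> real^'n \<Rightarrow> (real^'n) set \<Rightarrow> nat \<Rightarrow> real mat" where
  "hess_mat h x W m = (let e = (SOME e. onb W m e) in mat m m (\<lambda>(i,k). DD h x (e i) (e k)))"

definition eigvals :: "real mat \<Rightarrow> real list" where
  "eigvals A = sorted_list_of_multiset (proots (char_poly A))"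

definition esym :: "nat \<Rightarrow> real list \<Rightarrow> real" where
  "esym j xs = (\<Sum>S\<in>{S. S \<subseteq> {..<length xs} \<and> card S = j}. \<Prod>i\<in>S. xs ! i)"

definition s_gen :: "nat \<Rightarrow> (real^'n) set \<Rightarrow> real^'n \<Rightarrow> (real^'n) set \<Rightarrow> nat \<Rightarrow> real" where
  "s_gen j K x W m = esym j (eigvals (hess_mat (supp_fun K) x W m)) / real (m choose j)"

definition s_fun :: "nat \<Rightarrow> (real^'n) set \<Rightarrow> real^'n \<Rightarrow> real" where
  "s_fun j K u = s_gen j K u {x. x \<bullet> u = 0} (CARD('n) - 1)"

text \<open>s_j^{N^perp}(K,u), K viewed in N^perp, with W = N^perp \<inter> u^perp (dimension n-2).\<close>
definition s_fun_perp :: "real^'n \<Rightarrow> nat \<Rightarrow> (real^'n) set \<Rightarrow> real^'n \<Rightarrow> real" where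
  "s_fun_perp N j K u = s_gen j K u {x. x \<bullet> N = 0 \<and> x \<bullet> u = 0} (CARD('n) - 2)"

end

(*
  Since K lies in the hyperplane N^perp, its support function h is unchanged when a multiple of N
  is added to the argument, and h is positively 1-homogeneous. Writing u = c u~ + b N with
  c = |u|N^perp| = <u, u~>, this gives h x = c h (L x) for the linear map L x = (x|N^perp) / c,
  which sends u to u~. Hence h is twice differentiable at u, with D^2 h(u)(v, w) = c D^2 h(u~)(L v, L w).
  An orthonormal basis of the intersection of N^perp and u~^perp, completed by z = b u~ - c N, is an
  orthonormal basis of u^perp. L multiplies its first vectors by 1/c and sends z to the radial
  direction u~, which the Hessian of a 1-homogeneous function annihilates. So the eigenvalues at u
  are 0 together with 1/c times those at u~; sigma_j picks up the factor c^(-j), and the binomial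
  normalisations contribute binom(n-2, j) / binom(n-1, j) = 1 - j/(n-1).
*)
theory Submission
  imports Defs
begin

section \<open>Support functions\<close>

lemma supp_fun_attained:
  fixes K :: "(real^'n) set"
  assumes "compact K" "K \<noteq> {}"
  obtains y where "y \<in> K" "\<And>z. z \<in> K \<Longrightarrow> x \<bullet> z \<le> x \<bullet> y" "supp_fun K x = x \<bullet> y"
proof -
  have "compact ((\<lambda>y. x \<bullet> y) ` K)"
    by (intro compact_continuous_image continuous_intros assms)
  then obtain y where y: "y \<in> K" "\<And>z. z \<in> K \<Longrightarrow> x \<bullet> z \<le> x \<bullet> y"
    using compact_attains_sup[of "(\<lambda>y. x \<bullet> y) ` K"] assms(2) by auto
  then have "supp_fun K x = x \<bullet> y"
    unfolding supp_fun_def by (intro cSup_eq_maximum) auto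
  with y that show ?thesis by blast
qed

lemma supp_fun_scaleR:
  fixes K :: "(real^'n) set"
  assumes "compact K" "K \<noteq> {}" "0 \<le> t"
  shows "supp_fun K (t *\<^sub>R x) = t * supp_fun K x"
proof -
  obtain y where y: "y \<in> K" "\<And>z. z \<in> K \<Longrightarrow> x \<bullet> z \<le> x \<bullet> y" "supp_fun K x = x \<bullet> y"
    using supp_fun_attained[OF assms(1,2)] by blast
  have "supp_fun K (t *\<^sub>R x) = (t *\<^sub>R x) \<bullet> y"
    unfolding supp_fun_def using y assms(3) by (intro cSup_eq_maximum) (auto intro: mult_left_mono)
  then show ?thesis using y by simp
qed

lemma supp_fun_add_orthogonal:
  fixes K :: "(real^'n) set"
  assumes "K \<subseteq> {y. y \<bullet> N = 0}"
  shows "supp_fun K (x + t *\<^sub>R N) = supp_fun K x"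
proof -
  have "(x + t *\<^sub>R N) \<bullet> y = x \<bullet> y" if "y \<in> K" for y
    using assms that by (simp add: inner_add_left inner_commute[of N y] subset_iff)
  then show ?thesis unfolding supp_fun_def by (simp cong: image_cong)
qed

section \<open>Gradients and second derivatives\<close>

lemma frechet_derivative_eq_grad_inner:
  fixes h :: "real^'n \<Rightarrow> real"
  assumes "h differentiable at x"
  shows "frechet_derivative h (at x) w = grad h x \<bullet> w"
proof -
  interpret linear "frechet_derivative h (at x)"
    using linear_frechet_derivative[OF assms] .
  have "frechet_derivative h (at x) w = (\<Sum>i\<in>UNIV. w $ i * frechet_derivative h (at x) (axis i 1))"
    by (subst basis_expansion[of w, symmetric]) (simp add: scalar_mult_eq_scaleR sum scale)
  then show ?thesis
    unfolding grad_def inner_vec_def by (simp add: mult.commute)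
qed

lemma has_derivative_grad:
  fixes h :: "real^'n \<Rightarrow> real"
  assumes "h differentiable at x"
  shows "(h has_derivative (\<lambda>w. grad h x \<bullet> w)) (at x)"
proof -
  have "frechet_derivative h (at x) = (\<lambda>w. grad h x \<bullet> w)"
    using frechet_derivative_eq_grad_inner[OF assms] by (rule ext)
  with frechet_derivative_works[THEN iffD1, OF assms] show ?thesis by simp
qed

lemma grad_eqI:
  fixes h :: "real^'n \<Rightarrow> real"
  assumes "(h has_derivative (\<lambda>w. g \<bullet> w)) (at x)"
  shows "grad h x = g"
proof -
  have "h differentiable at x" using assms unfolding differentiable_def by blast
  have "(\<lambda>w. grad h x \<bullet> w) = (\<lambda>w. g \<bullet> w)"
    using has_derivative_unique[OF has_derivative_grad[OF \<open>h differentiable at x\<close>] assms] .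
  then show ?thesis unfolding fun_eq_iff vector_eq_rdot .
qed

lemma twice_diff_at_iff:
  "twice_diff_at h x \<longleftrightarrow> (\<forall>\<^sub>F y in nhds x. h differentiable at y) \<and> grad h differentiable at x"
  unfolding twice_diff_at_def eventually_nhds_conv_at by blast

lemma DD_eq_derivative_grad:
  fixes h :: "real^'n \<Rightarrow> real"
  assumes "twice_diff_at h x"
  shows "DD h x v w = frechet_derivative (grad h) (at x) v \<bullet> w"
proof -
  have G: "(grad h has_derivative frechet_derivative (grad h) (at x)) (at x)"
    using assms frechet_derivative_works unfolding twice_diff_at_iff by blast
  have "\<forall>\<^sub>F y in nhds x. grad h y \<bullet> w = frechet_derivative h (at y) w"
    using conjunct1[OF assms[unfolded twice_diff_at_iff]]
    by (rule eventually_mono) (simp add: frechet_derivative_eq_grad_inner)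
  then have "\<forall>\<^sub>F y in at x. grad h y \<bullet> w = frechet_derivative h (at y) w"
    "grad h x \<bullet> w = frechet_derivative h (at x) w"
    unfolding eventually_nhds_conv_at by simp_all
  with has_derivative_inner_left[OF G]
  have "((\<lambda>y. frechet_derivative h (at y) w) has_derivative
      (\<lambda>v. frechet_derivative (grad h) (at x) v \<bullet> w)) (at x)"
    by (rule has_derivative_transform_eventually) simp
  then show ?thesis unfolding DD_def by (rule frechet_derivative_at[symmetric, THEN fun_cong])
qed

lemma bilinear_DD:
  fixes h :: "real^'n \<Rightarrow> real"
  assumes "twice_diff_at h x"
  shows "bilinear (DD h x)"
proof -
  interpret linear "frechet_derivative (grad h) (at x)"
    using assms linear_frechet_derivative unfolding twice_diff_at_iff by blast
  show ?thesis
    unfolding bilinear_def DD_eq_derivative_grad[OF assms]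
    by (intro conjI allI linearI) (simp_all add: add scale inner_add_left inner_add_right)
qed

lemma has_derivative_rescaled_linear:
  fixes h :: "real^'n \<Rightarrow> real" and L :: "real^'n \<Rightarrow> real^'n"
  assumes "linear L" "\<And>x. h x = a * h (L x)" "(h has_derivative D) (at (L y))"
  shows "(h has_derivative (\<lambda>w. a * D (L w))) (at y)"
proof -
  have "(L has_derivative L) (at y)"
    using assms(1) linear_conv_bounded_linear bounded_linear_imp_has_derivative by blast
  from has_derivative_mult_right[OF diff_chain_at[OF this assms(3)], of a]
  have "((\<lambda>x. a * h (L x)) has_derivative (\<lambda>w. a * D (L w))) (at y)"
    by (simp add: o_def)
  moreover have "(\<lambda>x. a * h (L x)) = h" by (rule ext) (rule assms(2)[symmetric])
  ultimately show ?thesis by simp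
qed

lemma grad_rescaled_linear:
  fixes h :: "real^'n \<Rightarrow> real" and L :: "real^'n \<Rightarrow> real^'n"
  assumes L: "linear L" and h: "\<And>x. h x = a * h (L x)" and diff: "h differentiable at (L y)"
  shows "h differentiable at y" and "grad h y = a *\<^sub>R adjoint L (grad h (L y))"
proof -
  have deriv: "(h has_derivative (\<lambda>w. a * (grad h (L y) \<bullet> L w))) (at y)"
    using has_derivative_rescaled_linear[OF L h has_derivative_grad[OF diff]] .
  then show "h differentiable at y" unfolding differentiable_def by blast
  show "grad h y = a *\<^sub>R adjoint L (grad h (L y))"
    by (rule grad_eqI) (use deriv in \<open>simp add: adjoint_clauses[OF L] inner_commute\<close>)
qed

lemma twice_diff_at_rescaled_linear:
  fixes h :: "real^'n \<Rightarrow> real" and L :: "real^'n \<Rightarrow> real^'n"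
  assumes L: "linear L" and h: "\<And>x. h x = a * h (L x)" and td: "twice_diff_at h (L y)"
  shows "twice_diff_at h y" and "DD h y v w = a * DD h (L y) (L v) (L w)"
proof -
  have blL: "bounded_linear L" using L linear_conv_bounded_linear by blast
  have "(L \<longlongrightarrow> L y) (nhds y)"
    using linear_continuous_at[OF blL] by (simp add: isCont_def tendsto_at_iff_tendsto_nhds)
  then have "\<forall>\<^sub>F x in nhds y. h differentiable at (L x)"
    using eventually_compose_filterlim[OF conjunct1[OF td[unfolded twice_diff_at_iff]]] by blast
  then have near_y: "\<forall>\<^sub>F x in nhds y.
      h differentiable at x \<and> grad h x = a *\<^sub>R adjoint L (grad h (L x))"
    by (rule eventually_mono) (use grad_rescaled_linear[where h = h, OF L h] in blast)
  have adj: "bounded_linear (\<lambda>g. a *\<^sub>R adjoint L g)"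
    using adjoint_linear[OF L] linear_conv_bounded_linear
      bounded_linear_compose[OF bounded_linear_scaleR_right] by blast
  obtain H where H: "(grad h has_derivative H) (at (L y))"
    using td unfolding twice_diff_at_iff differentiable_def by blast
  have "((\<lambda>x. a *\<^sub>R adjoint L (grad h (L x))) has_derivative (\<lambda>v. a *\<^sub>R adjoint L (H (L v)))) (at y)"
    using diff_chain_at[OF diff_chain_at[OF bounded_linear_imp_has_derivative[OF blL] H]
        bounded_linear_imp_has_derivative[OF adj]]
    by (simp add: o_def)
  moreover have "\<forall>\<^sub>F x in at y. a *\<^sub>R adjoint L (grad h (L x)) = grad h x"
    "a *\<^sub>R adjoint L (grad h (L y)) = grad h y"
    using near_y unfolding eventually_nhds_conv_at by (auto elim: eventually_mono)
  ultimately have grad_deriv: "(grad h has_derivative (\<lambda>v. a *\<^sub>R adjoint L (H (L v)))) (at y)"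
    by (rule has_derivative_transform_eventually) simp
  show td_y: "twice_diff_at h y"
    unfolding twice_diff_at_iff
  proof
    show "\<forall>\<^sub>F x in nhds y. h differentiable at x" using near_y by (rule eventually_mono) blast
    show "grad h differentiable at y" using grad_deriv unfolding differentiable_def by blast
  qed
  show "DD h y v w = a * DD h (L y) (L v) (L w)"
    unfolding DD_eq_derivative_grad[OF td_y] DD_eq_derivative_grad[OF td]
      frechet_derivative_at[OF grad_deriv, symmetric] frechet_derivative_at[OF H, symmetric]
    by (simp add: adjoint_clauses[OF L])
qed

lemma grad_scaleR_pos_homogeneous:
  fixes h :: "real^'n \<Rightarrow> real"
  assumes hom: "\<And>s x. 0 < s \<Longrightarrow> h (s *\<^sub>R x) = s * h x"
    and diff: "h differentiable at x" and "0 < s"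
  shows "grad h (s *\<^sub>R x) = grad h x"
proof -
  have lin: "linear ((*\<^sub>R) (1 / s) :: real^'n \<Rightarrow> real^'n)"
    by (simp add: linearI scaleR_add_right)
  have "h z = s * h ((1 / s) *\<^sub>R z)" for z
    using hom[of s "(1 / s) *\<^sub>R z"] \<open>0 < s\<close> by simp
  moreover have "(h has_derivative (\<lambda>w. grad h x \<bullet> w)) (at ((1 / s) *\<^sub>R s *\<^sub>R x))"
    using has_derivative_grad[OF diff] \<open>0 < s\<close> by simp
  ultimately have "(h has_derivative (\<lambda>w. s * (grad h x \<bullet> ((1 / s) *\<^sub>R w)))) (at (s *\<^sub>R x))"
    by (rule has_derivative_rescaled_linear[OF lin])
  then show ?thesis
    by (intro grad_eqI) (use \<open>0 < s\<close> in simp)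
qed

text \<open>Euler's relation for the gradient of a positively \<open>1\<close>-homogeneous function:
  the gradient is constant along rays, so the Hessian kills the radial direction.\<close>
lemma DD_radial_pos_homogeneous:
  fixes h :: "real^'n \<Rightarrow> real"
  assumes hom: "\<And>s x. 0 < s \<Longrightarrow> h (s *\<^sub>R x) = s * h x" and td: "twice_diff_at h x"
  shows "DD h x x w = 0"
proof -
  have diff: "h differentiable at x"
    using td eventually_nhds_x_imp_x unfolding twice_diff_at_iff by blast
  define H where "H = frechet_derivative (grad h) (at x)"
  have H: "(grad h has_derivative H) (at x)"
    unfolding H_def using td frechet_derivative_works unfolding twice_diff_at_iff by blast
  have ray: "((\<lambda>t::real. (1 + t) *\<^sub>R x) has_derivative (\<lambda>t. t *\<^sub>R x)) (at 0)"
    by (auto intro!: derivative_eq_intros)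
  have "((\<lambda>t. grad h ((1 + t) *\<^sub>R x)) has_derivative (\<lambda>t. H (t *\<^sub>R x))) (at 0)"
    using diff_chain_at[OF ray, of "grad h" H] H by (simp add: o_def)
  moreover have "((\<lambda>t::real. grad h ((1 + t) *\<^sub>R x)) has_derivative (\<lambda>t. 0)) (at 0)"
  proof (rule has_derivative_transform_within[where d = 1, OF has_derivative_const])
    fix t :: real assume "dist t 0 < 1"
    then have "0 < 1 + t" by (simp add: dist_real_def abs_less_iff)
    then show "grad h x = grad h ((1 + t) *\<^sub>R x)"
      using grad_scaleR_pos_homogeneous[OF hom diff] by simp
  qed auto
  ultimately have "(\<lambda>t. H (t *\<^sub>R x)) = (\<lambda>t. 0)"
    by (rule has_derivative_unique)
  from fun_cong[OF this, of 1] have "H x = 0" by simp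
  then show ?thesis unfolding DD_eq_derivative_grad[OF td] H_def by simp
qed

section \<open>Characteristic polynomials and elementary symmetric functions\<close>

lemma pcompose_power_left: "pcompose (p ^ r) q = pcompose p q ^ r"
  by (induct r) (auto simp: pcompose_mult pcompose_1)

lemma order_pcompose_scale:
  fixes p :: "'a::idom poly"
  assumes "p \<noteq> 0" "a \<noteq> 0"
  shows "order x (pcompose p [:0, a:]) = order (a * x) p"
proof -
  define r where "r = order (a * x) p"
  obtain q where q: "p = [:- (a * x), 1:] ^ r * q" "\<not> [:- (a * x), 1:] dvd q"
    using order_decomp[OF assms(1)] unfolding r_def by blast
  define q' where "q' = pcompose q [:0, a:]"
  have "poly q (a * x) \<noteq> 0" using q(2) dvd_iff_poly_eq_0[of "- (a * x)" q] by simp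
  then have q'x: "poly q' x \<noteq> 0" by (simp add: q'_def poly_pcompose mult.commute)
  have "pcompose [:- (a * x), 1:] [:0, a:] = Polynomial.smult a [:- x, 1:]"
    by (simp add: pcompose_pCons)
  then have "pcompose p [:0, a:] = Polynomial.smult (a ^ r) ([:- x, 1:] ^ r) * q'"
    unfolding q'_def by (subst q(1)) (simp only: pcompose_mult pcompose_power_left smult_power)
  moreover have "q' \<noteq> 0" using q'x by auto
  ultimately have "order x (pcompose p [:0, a:]) = order x ([:- x, 1:] ^ r) + order x q'"
    using assms(2) by (simp add: order_mult order_smult)
  also have "\<dots> = r" using q'x by (simp add: order_power_n_n order_0I)
  finally show ?thesis unfolding r_def .
qed

lemma char_poly_nonzero:
  fixes A :: "'a::field mat"
  assumes "A \<in> carrier_mat n n"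
  shows "char_poly A \<noteq> 0"
  using degree_monic_char_poly[OF assms] by (metis leading_coeff_0_iff zero_neq_one)

lemma char_poly_smult:
  fixes A :: "'a::field_char_0 mat"
  assumes A: "A \<in> carrier_mat n n" and k: "k \<noteq> 0"
  shows "char_poly (k \<cdot>\<^sub>m A) = Polynomial.smult (k ^ n) (pcompose (char_poly A) [:0, inverse k:])"
proof (rule poly_ext)
  fix x
  have "- char_matrix (k \<cdot>\<^sub>m A) x = k \<cdot>\<^sub>m (- char_matrix A (inverse k * x))"
    using A k by (intro eq_matI) (auto simp: char_matrix_def field_simps)
  then have "det (- char_matrix (k \<cdot>\<^sub>m A) x) = k ^ n * det (- char_matrix A (inverse k * x))"
    using A by (simp add: char_matrix_def)
  then show "poly (char_poly (k \<cdot>\<^sub>m A)) x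
      = poly (Polynomial.smult (k ^ n) (pcompose (char_poly A) [:0, inverse k:])) x"
    using char_poly_matrix[of "k \<cdot>\<^sub>m A" n] char_poly_matrix[OF A] A
    by (simp add: poly_pcompose mult.commute)
qed

lemma proots_char_poly_smult:
  fixes A :: "'a::field_char_0 mat"
  assumes A: "A \<in> carrier_mat n n" and k: "k \<noteq> 0"
  shows "proots (char_poly (k \<cdot>\<^sub>m A)) = image_mset ((*) k) (proots (char_poly A))"
proof (rule multiset_eqI)
  fix y
  have nz: "char_poly A \<noteq> 0" using char_poly_nonzero[OF A] .
  have "count (proots (char_poly (k \<cdot>\<^sub>m A))) y = order (y / k) (char_poly A)"
    using k nz order_pcompose_scale[OF nz, of "inverse k" y]
    by (simp add: char_poly_smult[OF A k] order_smult pcompose_eq_0_iff field_simps)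
  also have "\<dots> = count (image_mset ((*) k) (proots (char_poly A))) y"
  proof -
    have "{x. x \<in># proots (char_poly A) \<and> y = k * x}
        = (if y / k \<in># proots (char_poly A) then {y / k} else {})"
      using k by (auto simp: field_simps)
    then show ?thesis using nz by (simp add: count_image_mset' order_root)
  qed
  finally show "count (proots (char_poly (k \<cdot>\<^sub>m A))) y
      = count (image_mset ((*) k) (proots (char_poly A))) y" .
qed

lemma char_poly_mat_last_row_zero:
  fixes Q :: "nat \<Rightarrow> nat \<Rightarrow> 'a::field"
  assumes "\<And>k. k < Suc m \<Longrightarrow> Q m k = 0"
  shows "char_poly (mat (Suc m) (Suc m) (\<lambda>(i, k). Q i k)) = [:0, 1:] * char_poly (mat m m (\<lambda>(i, k). Q i k))"
proof -
  define A where "A = mat (Suc m) (Suc m) (\<lambda>(i, k). Q i k)"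
  have C: "transpose_mat A \<in> carrier_mat (Suc m) (Suc m)" by (simp add: A_def)
  have "char_poly A = char_poly (transpose_mat A)"
    by (rule char_poly_transpose_mat[where n = "Suc m", symmetric]) (simp add: A_def)
  also have "\<dots> = monom 1 1 * char_poly (mat_delete (transpose_mat A) m m)"
    by (rule char_poly_0_column[OF _ C]) (auto simp: A_def assms)
  also have "mat_delete (transpose_mat A) m m = transpose_mat (mat m m (\<lambda>(i, k). Q i k))"
    by (rule eq_matI) (auto simp: A_def mat_delete_def)
  also have "char_poly \<dots> = char_poly (mat m m (\<lambda>(i, k). Q i k))"
    by (rule char_poly_transpose_mat[where n = m]) simp
  finally show ?thesis unfolding A_def by (simp add: x_as_monom)
qed

lemma esym_mset_cong:
  assumes "mset xs = mset ys"
  shows "esym j xs = esym j ys"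
proof -
  obtain p where p: "p permutes {..<length ys}" "permute_list p ys = xs"
    using mset_eq_permutation[OF assms] by blast
  define F where "F = {S. S \<subseteq> {..<length ys} \<and> card S = j}"
  have inj: "inj_on p S" for S using permutes_inj[OF p(1)] by (rule inj_on_subset) simp
  have "esym j xs = (\<Sum>S\<in>F. \<Prod>i\<in>S. ys ! p i)"
    unfolding esym_def F_def using p
    by (intro sum.cong prod.cong) (auto simp: permute_list_nth)
  also have "\<dots> = (\<Sum>S\<in>F. \<Prod>i\<in>p ` S. ys ! i)"
    by (simp add: prod.reindex[OF inj])
  also have "\<dots> = (\<Sum>T\<in>(`) p ` F. \<Prod>i\<in>T. ys ! i)"
    by (rule sum.reindex[symmetric, unfolded o_def])
      (use permutes_inj[OF p(1)] in \<open>auto simp: inj_on_def inj_image_eq_iff\<close>)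
  also have "(`) p ` F = F"
  proof -
    have "p ` S \<in> F" if "S \<in> F" for S
      using that permutes_image[OF p(1)] card_image[OF inj] by (auto simp: F_def)
    moreover have "S \<in> (`) p ` F" if "S \<in> F" for S
    proof
      show "S = p ` (inv_into UNIV p ` S)"
        using permutes_inverses(1)[OF p(1)] by (simp add: image_image)
      show "inv_into UNIV p ` S \<in> F"
        using that permutes_image[OF permutes_inv[OF p(1)]]
        card_image[OF inj_on_subset[OF permutes_inj[OF permutes_inv[OF p(1)]]]]
      by (auto simp: F_def)
    qed
    ultimately show ?thesis by blast
  qed
  finally show ?thesis unfolding esym_def F_def .
qed

lemma esym_append_zero:
  fixes xs :: "real list"
  assumes "1 \<le> j"
  shows "esym j (xs @ [0]) = esym j xs"
proof -
  define n where "n = length xs"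
  define F where "F = {S. S \<subseteq> {..<Suc n} \<and> card S = j}"
  define G where "G = {S. S \<subseteq> {..<n} \<and> card S = j}"
  have "esym j (xs @ [0]) = (\<Sum>S\<in>F. \<Prod>i\<in>S. (xs @ [0]) ! i)"
    unfolding esym_def F_def n_def by simp
  also have "\<dots> = (\<Sum>S\<in>G. \<Prod>i\<in>S. (xs @ [0]) ! i)"
  proof (rule sum.mono_neutral_right)
    show "finite F" unfolding F_def by (rule finite_subset[of _ "Pow {..<Suc n}"]) auto
    show "G \<subseteq> F" unfolding F_def G_def by auto
    show "\<forall>S\<in>F - G. (\<Prod>i\<in>S. (xs @ [0]) ! i) = 0"
    proof
      fix S assume S: "S \<in> F - G"
      then have "n \<in> S" "finite S" unfolding F_def G_def by (auto simp: less_Suc_eq intro: finite_subset)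
      then show "(\<Prod>i\<in>S. (xs @ [0]) ! i) = 0"
        by (intro prod_zero) (auto simp: n_def intro!: bexI[of _ n])
    qed
  qed
  also have "\<dots> = esym j xs"
    unfolding esym_def G_def n_def by (intro sum.cong prod.cong) (auto simp: nth_append)
  finally show ?thesis .
qed

lemma esym_map_mult:
  fixes xs :: "real list"
  shows "esym j (map ((*) a) xs) = a ^ j * esym j xs"
  unfolding esym_def length_map sum_distrib_left
proof (intro sum.cong refl)
  fix S assume S: "S \<in> {S. S \<subseteq> {..<length xs} \<and> card S = j}"
  then have "(\<Prod>i\<in>S. map ((*) a) xs ! i) = (\<Prod>i\<in>S. a * xs ! i)"
    by (intro prod.cong) auto
  with S show "(\<Prod>i\<in>S. map ((*) a) xs ! i) = a ^ j * (\<Prod>i\<in>S. xs ! i)"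
    by (simp add: prod.distrib)
qed

lemma esym_eigvals_zero_and_scaled:
  fixes A B :: "real mat"
  assumes "proots (char_poly A) = {#0#} + image_mset ((*) a) (proots (char_poly B))" and "1 \<le> j"
  shows "esym j (eigvals A) = a ^ j * esym j (eigvals B)"
proof -
  have "mset (eigvals A) = mset (map ((*) a) (eigvals B) @ [0])"
    unfolding eigvals_def assms(1) by simp
  then have "esym j (eigvals A) = esym j (map ((*) a) (eigvals B) @ [0])"
    by (rule esym_mset_cong)
  then show ?thesis using assms(2) by (simp add: esym_append_zero esym_map_mult)
qed

lemma one_minus_div_Suc_div_binomial:
  assumes "j \<le> m"
  shows "(1 - real j / real (Suc m)) / real (m choose j) = 1 / real (Suc m choose j)"
proof -
  have absorb: "real (Suc m) * real (m choose j) = real (Suc m - j) * real (Suc m choose j)"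
    using binomial_absorb_comp[of "Suc m" j] by (metis diff_Suc_1 of_nat_mult)
  have "1 - real j / real (Suc m) = real (Suc m - j) / real (Suc m)"
    using assms by (simp add: field_simps of_nat_diff)
  then have "(1 - real j / real (Suc m)) / real (m choose j)
      = real (Suc m - j) / (real (Suc m) * real (m choose j))"
    by simp
  also have "\<dots> = 1 / real (Suc m choose j)"
    unfolding absorb using assms by simp
  finally show ?thesis .
qed

section \<open>Orthonormal bases\<close>

lemma onb_expansion:
  fixes g :: "nat \<Rightarrow> real^'n"
  assumes "onb W p g" "x \<in> W"
  shows "(\<Sum>k<p. (x \<bullet> g k) *\<^sub>R g k) = x"
proof -
  have span: "span (g ` {..<p}) = W"
    and orth: "\<And>i k. i < p \<Longrightarrow> k < p \<Longrightarrow> g i \<bullet> g k = (if i = k then 1 else 0)"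
    using assms(1) unfolding onb_def by auto
  define y where "y = x - (\<Sum>k<p. (x \<bullet> g k) *\<^sub>R g k)"
  have "y \<in> span (g ` {..<p})"
    unfolding y_def using assms(2) span by (intro span_diff span_sum span_mul) (auto intro: span_base)
  moreover have "real_inner_class.orthogonal y v" if v: "v \<in> g ` {..<p}" for v
  proof -
    obtain l where l: "l < p" "v = g l" using v by blast
    have "(\<Sum>k<p. (x \<bullet> g k) * (g k \<bullet> g l)) = (\<Sum>k<p. if k = l then x \<bullet> g l else 0)"
      using l orth by (intro sum.cong) auto
    then show ?thesis
      using l by (simp add: real_inner_class.orthogonal_def y_def inner_diff_left inner_sum_left)
  qed
  ultimately have "real_inner_class.orthogonal y y" by (rule orthogonal_to_span)
  then show ?thesis unfolding y_def by (simp add: real_inner_class.orthogonal_def)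
qed

lemma onb_if_orthonormal:
  fixes g :: "nat \<Rightarrow> real^'n"
  assumes W: "subspace W" "dim W = p" and in_W: "\<And>i. i < p \<Longrightarrow> g i \<in> W"
    and orth: "\<And>i k. i < p \<Longrightarrow> k < p \<Longrightarrow> g i \<bullet> g k = (if i = k then 1 else 0)"
  shows "onb W p g"
proof -
  define B where "B = g ` {..<p}"
  have "inj_on g {..<p}"
  proof (rule inj_onI)
    fix i k assume "i \<in> {..<p}" "k \<in> {..<p}" "g i = g k"
    then show "i = k" using orth[of i i] orth[of i k] by (auto split: if_splits)
  qed
  then have "card B = p" unfolding B_def by (simp add: card_image)
  moreover have "independent B"
  proof (rule pairwise_orthogonal_independent)
    show "pairwise real_inner_class.orthogonal B"
      using orth by (auto simp: B_def pairwise_def real_inner_class.orthogonal_def)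
    have "g i \<noteq> 0" if "i < p" for i using orth[OF that that] by auto
    then show "0 \<notin> B" unfolding B_def by auto
  qed
  moreover have "B \<subseteq> W" using in_W B_def by auto
  ultimately have "span B = W"
    using W card_ge_dim_independent span_minimal[of B W] by (metis order_refl subset_antisym)
  then show ?thesis unfolding onb_def B_def using in_W orth by auto
qed

lemma onb_exists:
  fixes W :: "(real^'n) set"
  assumes "subspace W" "dim W = p"
  obtains e where "onb W p e"
proof -
  obtain B where B: "B \<subseteq> W" "pairwise real_inner_class.orthogonal B" "\<And>x. x \<in> B \<Longrightarrow> norm x = 1"
    "independent B" "card B = p"
    using orthonormal_basis_subspace[OF assms(1)] assms(2) by metis
  obtain e where e: "bij_betw e {..<p} B"
    using ex_bij_betw_nat_finite[of B] B(4,5) independent_imp_finite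
    by (metis atLeast0LessThan)
  have "onb W p e"
  proof (rule onb_if_orthonormal[OF assms])
    fix i k assume ik: "i < p" "k < p"
    then have "e i \<in> B" "e k \<in> B" using bij_betw_apply[OF e] by auto
    moreover have "e i \<noteq> e k" if "i \<noteq> k"
      using that ik inj_onD[OF bij_betw_imp_inj_on[OF e]] by blast
    ultimately show "e i \<bullet> e k = (if i = k then 1 else 0)"
      using B(2,3) by (auto simp: pairwise_def real_inner_class.orthogonal_def norm_eq_1)
  qed (use B(1) bij_betw_apply[OF e] in auto)
  then show ?thesis by (rule that)
qed

lemma bilinear_sum_scaleR:
  fixes Q :: "'a::real_vector \<Rightarrow> 'a \<Rightarrow> real"
  assumes "bilinear Q"
  shows "Q (\<Sum>k<p. a k *\<^sub>R g k) (\<Sum>l<p. b l *\<^sub>R g l) = (\<Sum>k<p. \<Sum>l<p. a k * Q (g k) (g l) * b l)"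
  unfolding bilinear_sum[OF assms] sum.cartesian_product[symmetric]
  by (simp add: bilinear_lmul[OF assms] bilinear_rmul[OF assms] mult_ac)

lemma onb_transition_orthogonal:
  fixes e g :: "nat \<Rightarrow> real^'n"
  assumes e: "onb W p e" and g: "onb W p g"
  shows "mat p p (\<lambda>(i, k). e i \<bullet> g k) * transpose_mat (mat p p (\<lambda>(i, k). e i \<bullet> g k)) = 1\<^sub>m p"
    (is "?T * transpose_mat ?T = _")
proof (rule eq_matI)
  fix i l assume "i < dim_row (1\<^sub>m p :: real mat)" "l < dim_col (1\<^sub>m p :: real mat)"
  then have il: "i < p" "l < p" by auto
  then have "(?T * transpose_mat ?T) $$ (i, l) = e i \<bullet> (\<Sum>k<p. (e l \<bullet> g k) *\<^sub>R g k)"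
    by (simp add: scalar_prod_def atLeast0LessThan inner_sum_right mult.commute)
  also have "\<dots> = e i \<bullet> e l"
    using e il unfolding onb_def by (simp add: onb_expansion[OF g])
  also have "\<dots> = 1\<^sub>m p $$ (i, l)"
    using e il unfolding onb_def by simp
  finally show "(?T * transpose_mat ?T) $$ (i, l) = 1\<^sub>m p $$ (i, l)" .
qed auto

lemma char_poly_bilinear_onb_indep:
  fixes e g :: "nat \<Rightarrow> real^'n" and Q :: "real^'n \<Rightarrow> real^'n \<Rightarrow> real"
  assumes e: "onb W p e" and g: "onb W p g" and Q: "bilinear Q"
  shows "char_poly (mat p p (\<lambda>(i, k). Q (e i) (e k))) = char_poly (mat p p (\<lambda>(i, k). Q (g i) (g k)))"
proof -
  define T where "T = mat p p (\<lambda>(i, k). e i \<bullet> g k)"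
  define Ae where "Ae = mat p p (\<lambda>(i, k). Q (e i) (e k))"
  define Ag where "Ag = mat p p (\<lambda>(i, k). Q (g i) (g k))"
  have C: "T \<in> carrier_mat p p" "transpose_mat T \<in> carrier_mat p p" "Ag \<in> carrier_mat p p"
    by (auto simp: T_def Ag_def)
  have T_orth: "T * transpose_mat T = 1\<^sub>m p"
    unfolding T_def using onb_transition_orthogonal[OF e g] .
  have expand: "(\<Sum>k<p. (e i \<bullet> g k) *\<^sub>R g k) = e i" if "i < p" for i
    using onb_expansion[OF g] e that unfolding onb_def by blast
  have Ae_conj: "Ae = T * Ag * transpose_mat T"
  proof (rule eq_matI)
    fix i l assume "i < dim_row (T * Ag * transpose_mat T)" "l < dim_col (T * Ag * transpose_mat T)"
    then have il: "i < p" "l < p" using C by auto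
    then have "(T * Ag * transpose_mat T) $$ (i, l)
        = (\<Sum>m<p. (\<Sum>k<p. (e i \<bullet> g k) * Q (g k) (g m)) * (e l \<bullet> g m))"
      using C by (simp add: T_def Ag_def scalar_prod_def atLeast0LessThan)
    also have "\<dots> = Q (\<Sum>k<p. (e i \<bullet> g k) *\<^sub>R g k) (\<Sum>m<p. (e l \<bullet> g m) *\<^sub>R g m)"
      unfolding bilinear_sum_scaleR[OF Q] by (simp add: sum_distrib_right) (rule sum.swap)
    also have "\<dots> = Q (e i) (e l)"
      by (simp only: expand il)
    finally show "Ae $$ (i, l) = (T * Ag * transpose_mat T) $$ (i, l)"
      using il by (simp add: Ae_def)
  qed (use C in \<open>auto simp: Ae_def\<close>)
  have "similar_mat_wit Ae Ag T (transpose_mat T)"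
    unfolding similar_mat_wit_def Let_def
    using C T_orth mat_mult_left_right_inverse[OF C(1,2) T_orth] Ae_conj by (auto simp: Ae_def)
  then have "similar_mat Ae Ag" unfolding similar_mat_def by blast
  then show ?thesis unfolding Ae_def Ag_def by (rule char_poly_similar)
qed

lemma char_poly_hess_mat:
  fixes h :: "real^'n \<Rightarrow> real"
  assumes "twice_diff_at h x" "onb W p e"
  shows "char_poly (hess_mat h x W p) = char_poly (mat p p (\<lambda>(i, k). DD h x (e i) (e k)))"
  unfolding hess_mat_def Let_def
  using char_poly_bilinear_onb_indep[OF someI[of "\<lambda>e. onb W p e", OF assms(2)] assms(2)
      bilinear_DD[OF assms(1)]] .

section \<open>Directions off the normal axis\<close>

locale off_axis_direction =
  fixes N u :: "real^'n"
  assumes norm_N: "norm N = 1" and norm_u: "norm u = 1" and u_neq: "u \<noteq> N" "u \<noteq> - N"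
begin

definition b :: real where "b = u \<bullet> N"
definition c :: real where "c = norm (u - b *\<^sub>R N)"
definition u_tilde :: "real^'n" where "u_tilde = (u - b *\<^sub>R N) /\<^sub>R c"
definition L :: "real^'n \<Rightarrow> real^'n" where "L x = (1 / c) *\<^sub>R (x - (x \<bullet> N) *\<^sub>R N)"
definition z :: "real^'n" where "z = b *\<^sub>R u_tilde - c *\<^sub>R N"
definition W :: "(real^'n) set" where "W = {x. x \<bullet> N = 0 \<and> x \<bullet> u_tilde = 0}"

lemma N_inner_N: "N \<bullet> N = 1"
  using norm_N by (simp add: norm_eq_1)

lemma u_neq_scaled_N: "u \<noteq> t *\<^sub>R N"
proof
  assume u: "u = t *\<^sub>R N"
  then have "\<bar>t\<bar> = 1" using norm_u norm_N by simp
  then show False using u u_neq by (auto simp: abs_if split: if_splits)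
qed

lemma c_pos: "0 < c"
  using u_neq_scaled_N[of b] unfolding c_def by simp

lemma u_tilde_N: "u_tilde \<bullet> N = 0"
  unfolding u_tilde_def b_def by (simp add: inner_diff_left N_inner_N)

lemma N_u_tilde: "N \<bullet> u_tilde = 0"
  using u_tilde_N by (simp add: inner_commute)

lemma u_tilde_u_tilde: "u_tilde \<bullet> u_tilde = 1"
proof -
  have "norm u_tilde = 1"
    using c_pos unfolding u_tilde_def c_def by (simp add: sgn_div_norm[symmetric] norm_sgn)
  then show ?thesis by (simp add: norm_eq_1)
qed

text \<open>Oriented this way on purpose: the locale constants contain \<open>u\<close>, so rewriting \<open>u\<close>
  would loop.\<close>
lemma u_decomp: "c *\<^sub>R u_tilde + b *\<^sub>R N = u"
  using c_pos unfolding u_tilde_def by simp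

lemma inner_u: "x \<bullet> u = c * (x \<bullet> u_tilde) + b * (x \<bullet> N)"
proof -
  have "x \<bullet> u = x \<bullet> (c *\<^sub>R u_tilde + b *\<^sub>R N)" by (simp only: u_decomp)
  then show ?thesis by (simp add: inner_add_right)
qed

lemma u_inner_u_tilde: "u \<bullet> u_tilde = c"
  using inner_u[of u_tilde] by (simp add: inner_commute u_tilde_u_tilde u_tilde_N N_u_tilde)

lemma c_sq_plus_b_sq: "c\<^sup>2 + b\<^sup>2 = 1"
proof -
  have "u \<bullet> u = c * c + b * b"
    using inner_u[of u] u_inner_u_tilde by (simp add: inner_commute b_def)
  then show ?thesis using norm_u by (simp add: norm_eq_1 power2_eq_square)
qed

lemma linear_L: "linear L"
  unfolding L_def by (intro linearI) (simp_all add: inner_add_left algebra_simps)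

lemma L_u: "L u = u_tilde"
  unfolding L_def u_tilde_def b_def by (simp add: divide_inverse_commute)

lemma L_orthogonal: "x \<bullet> N = 0 \<Longrightarrow> L x = (1 / c) *\<^sub>R x"
  unfolding L_def by simp

lemma L_z: "L z = (b / c) *\<^sub>R u_tilde"
  unfolding L_def z_def by (simp add: inner_diff_left u_tilde_N N_inner_N)

lemma supp_fun_eq_rescaled:
  assumes "compact K" "K \<noteq> {}" "K \<subseteq> {x. x \<bullet> N = 0}"
  shows "supp_fun K x = c * supp_fun K (L x)"
proof -
  have "supp_fun K x = supp_fun K (x + (- (x \<bullet> N)) *\<^sub>R N)"
    by (rule supp_fun_add_orthogonal[OF assms(3), symmetric])
  also have "x + (- (x \<bullet> N)) *\<^sub>R N = c *\<^sub>R L x"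
    using c_pos by (simp add: L_def)
  also have "supp_fun K (c *\<^sub>R L x) = c * supp_fun K (L x)"
    using supp_fun_scaleR[OF assms(1,2)] c_pos by simp
  finally show ?thesis .
qed

lemma subspace_W: "subspace W"
  unfolding W_def by (auto simp: subspace_def inner_add_left)

lemma dim_W: "dim W + 2 = CARD('n)"
proof -
  have "N \<noteq> u_tilde" using N_inner_N u_tilde_N by auto
  have "independent {N, u_tilde}"
  proof (rule pairwise_orthogonal_independent)
    show "pairwise real_inner_class.orthogonal {N, u_tilde}"
      using u_tilde_N by (auto simp: pairwise_def real_inner_class.orthogonal_def inner_commute)
    show "0 \<notin> {N, u_tilde}" using N_inner_N u_tilde_u_tilde by auto
  qed
  then have dim2: "dim (span {N, u_tilde}) = 2"
    using dim_span_eq_card_independent \<open>N \<noteq> u_tilde\<close> by fastforce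
  have "W = {y \<in> UNIV. \<forall>x \<in> span {N, u_tilde}. real_inner_class.orthogonal x y}"
  proof (rule equalityI; rule subsetI)
    fix y assume "y \<in> W"
    then have "real_inner_class.orthogonal y x" if "x \<in> {N, u_tilde}" for x
      using that unfolding W_def real_inner_class.orthogonal_def by auto
    then show "y \<in> {y \<in> UNIV. \<forall>x \<in> span {N, u_tilde}. real_inner_class.orthogonal x y}"
      using orthogonal_to_span orthogonal_commute by blast
  next
    fix y assume "y \<in> {y \<in> UNIV. \<forall>x \<in> span {N, u_tilde}. real_inner_class.orthogonal x y}"
    then have "real_inner_class.orthogonal N y" "real_inner_class.orthogonal u_tilde y"
      by (auto intro: span_base)
    then show "y \<in> W" unfolding W_def real_inner_class.orthogonal_def by (simp add: inner_commute)
  qed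
  with dim_subspace_orthogonal_to_vectors[of "span {N, u_tilde}" UNIV] dim2 show ?thesis
    by simp
qed

lemma onb_u_perp:
  assumes f: "onb W m f" and m: "dim W = m"
  shows "onb {x. x \<bullet> u = 0} (Suc m) (\<lambda>i. if i < m then f i else z)"
proof (rule onb_if_orthonormal)
  have "{x. x \<bullet> u = 0} = {x. u \<bullet> x = 0}" by (simp add: inner_commute)
  then show "subspace {x. x \<bullet> u = 0}" "dim {x. x \<bullet> u = 0} = Suc m"
    using subspace_hyperplane[of u] dim_hyperplane[of u] norm_u dim_W m by fastforce+
  have f_W: "f i \<bullet> N = 0" "f i \<bullet> u_tilde = 0" if "i < m" for i
    using f that unfolding onb_def W_def by auto
  have z_N: "z \<bullet> N = - c" and z_u_tilde: "z \<bullet> u_tilde = b"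
    unfolding z_def by (simp_all add: inner_diff_left u_tilde_N N_u_tilde N_inner_N u_tilde_u_tilde)
  have z_f: "z \<bullet> f i = 0" "f i \<bullet> z = 0" if "i < m" for i
    using f_W[OF that] unfolding z_def by (simp_all add: inner_diff_left inner_diff_right inner_commute)
  have "z \<bullet> z = z \<bullet> (b *\<^sub>R u_tilde - c *\<^sub>R N)" by (simp only: z_def[symmetric])
  also have "\<dots> = b\<^sup>2 + c\<^sup>2" by (simp add: inner_diff_right z_N z_u_tilde power2_eq_square)
  finally have z_z: "z \<bullet> z = 1" using c_sq_plus_b_sq by simp
  show "(if i < m then f i else z) \<in> {x. x \<bullet> u = 0}" if "i < Suc m" for i
    using f_W[of i] z_N z_u_tilde by (simp add: inner_u)
  show "(if i < m then f i else z) \<bullet> (if k < m then f k else z) = (if i = k then 1 else 0)"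
    if "i < Suc m" "k < Suc m" for i k
    using that f z_z z_f[of i] z_f[of k] unfolding onb_def by (auto simp: less_Suc_eq)
qed

lemma rescaled_twice_diff_at_u:
  fixes h :: "real^'n \<Rightarrow> real"
  assumes "\<And>x. h x = c * h (L x)" and "twice_diff_at h u_tilde"
  shows "twice_diff_at h u" and "DD h u v w = c * DD h u_tilde (L v) (L w)"
  using twice_diff_at_rescaled_linear[where h = h and y = u, OF linear_L assms(1)] assms(2)
  by (simp_all add: L_u)

text \<open>\<open>L\<close> maps \<open>z\<close> into the radial direction \<open>u_tilde\<close>, which the Hessian at
  \<open>u_tilde\<close> annihilates; this produces the zero row.\<close>
lemma char_poly_hess_mat_u:
  fixes h :: "real^'n \<Rightarrow> real"
  assumes h_L: "\<And>x. h x = c * h (L x)" and hom: "\<And>s x. 0 < s \<Longrightarrow> h (s *\<^sub>R x) = s * h x"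
    and td: "twice_diff_at h u_tilde" and f: "onb W m f" and m: "dim W = m"
  shows "char_poly (hess_mat h u {x. x \<bullet> u = 0} (Suc m))
    = [:0, 1:] * char_poly ((1 / c) \<cdot>\<^sub>m mat m m (\<lambda>(i, k). DD h u_tilde (f i) (f k)))"
proof -
  define g where "g i = (if i < m then f i else z)" for i
  have g: "onb {x. x \<bullet> u = 0} (Suc m) g"
    unfolding g_def using onb_u_perp[OF f m] .
  note DD_u = rescaled_twice_diff_at_u(2)[OF h_L td]
  have B: "bilinear (DD h u_tilde)" using bilinear_DD[OF td] .
  have z_row: "DD h u z w = 0" for w
    unfolding DD_u L_z bilinear_lmul[OF B] using DD_radial_pos_homogeneous[OF hom td] by simp
  have W_block: "DD h u (f i) (f k) = (1 / c) * DD h u_tilde (f i) (f k)" if "i < m" "k < m" for i k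
  proof -
    have "f i \<bullet> N = 0" "f k \<bullet> N = 0" using f that unfolding onb_def W_def by auto
    then show ?thesis
      using c_pos by (simp add: DD_u L_orthogonal bilinear_lmul[OF B] bilinear_rmul[OF B])
  qed
  have "char_poly (hess_mat h u {x. x \<bullet> u = 0} (Suc m))
      = char_poly (mat (Suc m) (Suc m) (\<lambda>(i, k). DD h u (g i) (g k)))"
    by (rule char_poly_hess_mat[OF rescaled_twice_diff_at_u(1)[OF h_L td] g])
  also have "\<dots> = [:0, 1:] * char_poly (mat m m (\<lambda>(i, k). DD h u (g i) (g k)))"
    by (rule char_poly_mat_last_row_zero) (simp add: g_def z_row)
  also have "mat m m (\<lambda>(i, k). DD h u (g i) (g k))
      = (1 / c) \<cdot>\<^sub>m mat m m (\<lambda>(i, k). DD h u_tilde (f i) (f k))"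
    by (rule eq_matI) (auto simp: g_def W_block)
  finally show ?thesis .
qed

lemma proots_char_poly_hess_mat_u:
  fixes h :: "real^'n \<Rightarrow> real"
  assumes h_L: "\<And>x. h x = c * h (L x)" and hom: "\<And>s x. 0 < s \<Longrightarrow> h (s *\<^sub>R x) = s * h x"
    and td: "twice_diff_at h u_tilde"
  shows "proots (char_poly (hess_mat h u {x. x \<bullet> u = 0} (CARD('n) - 1)))
    = {#0#} + image_mset ((*) (1 / c)) (proots (char_poly (hess_mat h u_tilde W (CARD('n) - 2))))"
proof -
  define m where "m = CARD('n) - 2"
  have m: "dim W = m" "CARD('n) - 1 = Suc m" using dim_W by (auto simp: m_def)
  obtain f where f: "onb W m f" using onb_exists[OF subspace_W m(1)] .
  define A where "A = mat m m (\<lambda>(i, k). DD h u_tilde (f i) (f k))"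
  have A: "A \<in> carrier_mat m m" by (simp add: A_def)
  have "char_poly ((1 / c) \<cdot>\<^sub>m A) \<noteq> 0"
    by (rule char_poly_nonzero[of _ m]) (simp add: A)
  have "char_poly (hess_mat h u {x. x \<bullet> u = 0} (Suc m)) = [:0, 1:] * char_poly ((1 / c) \<cdot>\<^sub>m A)"
    unfolding A_def by (rule char_poly_hess_mat_u[OF h_L hom td f m(1)])
  then have "proots (char_poly (hess_mat h u {x. x \<bullet> u = 0} (CARD('n) - 1)))
      = proots ([:0, 1:] * char_poly ((1 / c) \<cdot>\<^sub>m A))"
    unfolding m(2) by simp
  also have "\<dots> = proots [:0, 1:] + proots (char_poly ((1 / c) \<cdot>\<^sub>m A))"
    by (rule proots_mult) (simp_all add: \<open>char_poly ((1 / c) \<cdot>\<^sub>m A) \<noteq> 0\<close>)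
  also have "\<dots> = {#0#} + image_mset ((*) (1 / c)) (proots (char_poly A))"
    using proots_linear_factor[of "0::real"] proots_char_poly_smult[OF A, of "1 / c"] c_pos by simp
  also have "char_poly A = char_poly (hess_mat h u_tilde W (CARD('n) - 2))"
    unfolding A_def m_def[symmetric] by (rule char_poly_hess_mat[OF td f, symmetric])
  finally show ?thesis .
qed

lemma s_fun_u:
  assumes K: "compact K" "K \<noteq> {}" "K \<subseteq> {x. x \<bullet> N = 0}"
    and td: "twice_diff_at (supp_fun K) u_tilde" and j: "1 \<le> j" "j \<le> CARD('n) - 2"
  shows "s_fun j K u = (1 - real j / real (CARD('n) - 1)) / (u \<bullet> u_tilde) ^ j * s_fun_perp N j K u_tilde"
proof -
  define m where "m = CARD('n) - 2"
  have m: "CARD('n) - 1 = Suc m" using j by (simp add: m_def)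
  have hom: "\<And>s x. 0 < s \<Longrightarrow> supp_fun K (s *\<^sub>R x) = s * supp_fun K x"
    using supp_fun_scaleR[OF K(1,2)] by simp
  define E where "E = esym j (eigvals (hess_mat (supp_fun K) u_tilde W m))"
  have "esym j (eigvals (hess_mat (supp_fun K) u {x. x \<bullet> u = 0} (CARD('n) - 1))) = (1 / c) ^ j * E"
    unfolding E_def m_def
    using proots_char_poly_hess_mat_u[OF supp_fun_eq_rescaled[OF K] hom td] j(1)
    by (rule esym_eigvals_zero_and_scaled)
  then have "s_fun j K u = (1 / c) ^ j * E / real (Suc m choose j)"
    unfolding s_fun_def s_gen_def m by simp
  moreover have "s_fun_perp N j K u_tilde = E / real (m choose j)"
    unfolding s_fun_perp_def s_gen_def E_def W_def m_def ..
  moreover have "(1 - real j / real (Suc m)) / real (m choose j) = 1 / real (Suc m choose j)"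
    using j by (intro one_minus_div_Suc_div_binomial) (simp add: m_def)
  moreover have "(1 - real j / real (Suc m)) / c ^ j * (E / real (m choose j))
      = E / c ^ j * ((1 - real j / real (Suc m)) / real (m choose j))"
    by simp
  ultimately show ?thesis
    unfolding m u_inner_u_tilde by (simp add: power_one_over)
qed

end

theorem proposition5p5:
  fixes N u :: "real^'n" and K :: "(real^'n) set" and j :: nat
  assumes "CARD('n) \<ge> 3"
    and "1 \<le> j" and "j \<le> CARD('n) - 2"
    and "norm N = 1"
    and "compact K" and "convex K" and "K \<noteq> {}" and "K \<subseteq> {x. x \<bullet> N = 0}"
    and "norm u = 1" and "u \<noteq> N" and "u \<noteq> - N"
    and "twice_diff_at (supp_fun K)
           ((u - (u \<bullet> N) *\<^sub>R N) /\<^sub>R norm (u - (u \<bullet> N) *\<^sub>R N))"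
  shows "twice_diff_at (supp_fun K) u \<and>
    s_fun j K u =
      (1 - real j / real (CARD('n) - 1))
        / (u \<bullet> ((u - (u \<bullet> N) *\<^sub>R N) /\<^sub>R norm (u - (u \<bullet> N) *\<^sub>R N))) ^ j
        * s_fun_perp N j K ((u - (u \<bullet> N) *\<^sub>R N) /\<^sub>R norm (u - (u \<bullet> N) *\<^sub>R N))"
proof -
  interpret off_axis_direction N u
    using assms by unfold_locales auto
  have u_tilde: "(u - (u \<bullet> N) *\<^sub>R N) /\<^sub>R norm (u - (u \<bullet> N) *\<^sub>R N) = u_tilde"
    unfolding u_tilde_def c_def b_def ..
  have K: "compact K" "K \<noteq> {}" "K \<subseteq> {x. x \<bullet> N = 0}" using assms by auto
  have td: "twice_diff_at (supp_fun K) u_tilde" using assms(12) unfolding u_tilde .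
  show ?thesis
    unfolding u_tilde
    using rescaled_twice_diff_at_u(1)[OF supp_fun_eq_rescaled[OF K] td] s_fun_u[OF K td assms(2,3)]
    by simp
qed

end
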